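(* Let $p\ge 1$, $n,m\ge 1$, and let $\tilde X_1,\dots,\tilde X_n\in\mathbb R^p$, $\tilde Y_1,\dots,\tilde Y_n\in\mathbb R$ and $(X_1,Y_1),\dots,(X_m,Y_m)\in\mathbb R^p\times\mathbb R$ be given data. Let $f(t)=c_\alpha\exp(-d^{-\alpha}|t|^\alpha)$, $t\in\mathbb R$, for some $\alpha\ge 1$, $d>0$ and $c_\alpha=\frac{\alpha}{2d\Gamma(1/\alpha)}$. Define, for $\beta\in\mathbb R^p$, $$\ell_{n,m}(\beta)=\frac{1}{n+m}\sum_{j=1}^n\log\Big(\frac1n\sum_{i=1}^n f(\tilde Y_j-\beta^\top\tilde X_i)\Big)+\frac{1}{n+m}\sum_{k=1}^m\log f(Y_k-\beta^\top X_k).$$ If the matrix $M\in\mathbb R^{m\times p}$ whose $k$-th row is $X_k^\top$ has $\operatorname{rank}(M)=p$, then $\ell_{n,m}$ admits at least one maximizer over $\mathbb R^p$.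
   Context: This is the "semi-supervised learning empirical log-likelihood" for the linear model $Y=\beta_0^\top X+\epsilon$ with noise density $f$, combining an unmatched sample ($\tilde X_i$, $\tilde Y_j$) and a matched sample $(X_k,Y_k)$. *)

theory Defs
  imports "HOL-Analysis.Analysis"
begin

definition gn_density :: "real \<Rightarrow> real \<Rightarrow> real \<Rightarrow> real" where
  "gn_density \<alpha> d t = \<alpha> / (2 * d * Gamma (1 / \<alpha>)) * exp (- (d powr (-\<alpha>)) * (\<bar>t\<bar> powr \<alpha>))"

text \<open>The unmatched sample is indexed by
  the finite type 'n (so n = CARD('n)), the matched sample by rows of the matrix
  M :: real^'p^'m (row k is X_k, so m = CARD('m)), dimension p = CARD('p).\<close>
definition ssl_loglik ::
  "real \<Rightarrow> real \<Rightarrow> ('n::finite \<Rightarrow> real^'p::finite) \<Rightarrow> ('n \<Rightarrow> real)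
    \<Rightarrow> real^'p^'m::finite \<Rightarrow> ('m \<Rightarrow> real) \<Rightarrow> real^'p \<Rightarrow> real" where
  "ssl_loglik \<alpha> d Xt Yt M Y \<beta> =
     (1 / real (CARD('n) + CARD('m))) *
       (\<Sum>j\<in>UNIV. ln ((1 / real CARD('n)) * (\<Sum>i\<in>UNIV. gn_density \<alpha> d (Yt j - \<beta> \<bullet> Xt i))))
   + (1 / real (CARD('n) + CARD('m))) *
       (\<Sum>k\<in>UNIV. ln (gn_density \<alpha> d (Y k - \<beta> \<bullet> (M $ k))))"

end

theory Submission
  imports Defs
begin

text \<open>The unmatched part of the likelihood is bounded above, since the density is bounded by
  its value at 0, while the matched part equals a constant minus a positive multiple of
  \<open>\<Sum>\<^sub>k \<bar>Y\<^sub>k - \<beta>\<^sup>T X\<^sub>k\<bar>\<^sup>\<alpha>\<close>. For \<open>\<alpha> \<ge> 1\<close> this sum dominates the \<open>\<ell>\<^sub>1\<close>-norm of the residual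
  vector up to a constant, and full column rank of \<open>M\<close> makes the residual norm grow at least
  linearly in \<open>\<parallel>\<beta>\<parallel>\<close>. Hence the superlevel sets of the continuous log-likelihood are
  compact, and a maximizer exists.\<close>

lemma continuous_attains_max_if_bounded_superlevel:
  fixes L :: "'a::heine_borel \<Rightarrow> real"
  assumes "continuous_on UNIV L" and "bounded {x. L x0 \<le> L x}"
  shows "\<exists>x. \<forall>y. L y \<le> L x"
proof -
  let ?S = "{x. L x0 \<le> L x}"
  have "closed ?S"
    by (rule closed_Collect_le[OF continuous_on_const assms(1)])
  with assms(2) have "compact ?S"
    by (simp add: compact_eq_bounded_closed)
  moreover have "?S \<noteq> {}" by auto
  moreover have "continuous_on ?S L"
    using assms(1) continuous_on_subset by blast
  ultimately obtain x where x: "L x0 \<le> L x" and max: "\<And>y. L x0 \<le> L y \<Longrightarrow> L y \<le> L x"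
    using continuous_attains_sup[of ?S L] by auto
  have "L y \<le> L x" for y
  proof (cases "L x0 \<le> L y")
    case True
    then show ?thesis by (rule max)
  next
    case False
    with x show ?thesis by linarith
  qed
  then show ?thesis by blast
qed

lemma gn_density_pos:
  assumes "\<alpha> > 0" and "d > 0"
  shows "gn_density \<alpha> d t > 0"
  using assms by (simp add: gn_density_def)

lemma gn_density_eq_at_0_times_exp:
  assumes "\<alpha> > 0"
  shows "gn_density \<alpha> d t = gn_density \<alpha> d 0 * exp (- (d powr (-\<alpha>)) * \<bar>t\<bar> powr \<alpha>)"
  using assms by (simp add: gn_density_def)

lemma gn_density_le_at_0:
  assumes "\<alpha> > 0" and "d > 0"
  shows "gn_density \<alpha> d t \<le> gn_density \<alpha> d 0"
proof -
  have "exp (- (d powr (-\<alpha>)) * \<bar>t\<bar> powr \<alpha>) \<le> 1"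
    by simp
  then show ?thesis
    using gn_density_pos[OF assms, of 0]
    by (subst gn_density_eq_at_0_times_exp[OF assms(1)]) (simp add: mult_left_le)
qed

lemma ln_gn_density:
  assumes "\<alpha> > 0" and "d > 0"
  shows "ln (gn_density \<alpha> d t) = ln (gn_density \<alpha> d 0) - d powr (-\<alpha>) * \<bar>t\<bar> powr \<alpha>"
  using gn_density_pos[OF assms, of 0]
  by (subst gn_density_eq_at_0_times_exp[OF assms(1)]) (simp add: ln_mult)

lemma continuous_on_gn_density:
  assumes "\<alpha> > 0"
  shows "continuous_on UNIV (gn_density \<alpha> d)"
proof -
  have abs_powr: "continuous_on UNIV (\<lambda>t::real. \<bar>t\<bar> powr \<alpha>)"
    using assms by (intro continuous_on_powr' continuous_intros) auto
  have "continuous_on UNIV (\<lambda>t. gn_density \<alpha> d 0 * exp (- (d powr (-\<alpha>)) * \<bar>t\<bar> powr \<alpha>))"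
    by (intro continuous_on_mult_left continuous_on_exp abs_powr)
  moreover have "gn_density \<alpha> d = (\<lambda>t. gn_density \<alpha> d 0 * exp (- (d powr (-\<alpha>)) * \<bar>t\<bar> powr \<alpha>))"
    using gn_density_eq_at_0_times_exp[OF assms] by blast
  ultimately show ?thesis
    by metis
qed

lemma abs_minus_one_le_powr:
  fixes t \<alpha> :: real
  assumes "\<alpha> \<ge> 1"
  shows "\<bar>t\<bar> - 1 \<le> \<bar>t\<bar> powr \<alpha>"
proof (cases "\<bar>t\<bar> \<ge> 1")
  case True
  then have "\<bar>t\<bar> powr 1 \<le> \<bar>t\<bar> powr \<alpha>"
    using assms by (intro powr_mono) auto
  with True show ?thesis by simp
next
  case False
  then show ?thesis using powr_ge_zero[of "\<bar>t\<bar>" \<alpha>] by linarith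
qed

lemma full_rank_imp_norm_matrix_vector_mult_ge:
  fixes M :: "real^'p^'m"
  assumes "rank M = CARD('p)"
  obtains e where "e > 0" and "\<And>x. e * norm x \<le> norm (M *v x)"
proof -
  have "inj ((*v) M)"
    using assms full_rank_injective by blast
  then have "\<exists>e>0. \<forall>x\<in>UNIV. e * norm x \<le> norm (M *v x)"
    by (intro injective_imp_isometric)
       (auto simp: inj_on_def)
  then show ?thesis using that by blast
qed

lemma bounded_residual_powr_sublevel:
  fixes M :: "real^'p^'m" and Y :: "'m \<Rightarrow> real"
  assumes "\<alpha> \<ge> 1" and "rank M = CARD('p)"
  shows "bounded {\<beta>. (\<Sum>k\<in>UNIV. \<bar>Y k - \<beta> \<bullet> (M $ k)\<bar> powr \<alpha>) \<le> C}"
proof -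
  obtain e where e: "e > 0" "\<And>x. e * norm x \<le> norm (M *v x)"
    using full_rank_imp_norm_matrix_vector_mult_ge[OF assms(2)] by blast
  define B where "B = C + real CARD('m) + (\<Sum>k\<in>UNIV. \<bar>Y k\<bar>)"
  have "norm \<beta> \<le> B / e"
    if \<beta>: "(\<Sum>k\<in>UNIV. \<bar>Y k - \<beta> \<bullet> (M $ k)\<bar> powr \<alpha>) \<le> C" for \<beta>
  proof -
    have "(\<Sum>k\<in>UNIV. \<bar>Y k - \<beta> \<bullet> (M $ k)\<bar> - 1) \<le> (\<Sum>k\<in>UNIV. \<bar>Y k - \<beta> \<bullet> (M $ k)\<bar> powr \<alpha>)"
      by (intro sum_mono abs_minus_one_le_powr assms(1))
    with \<beta> have residual: "(\<Sum>k\<in>UNIV. \<bar>Y k - \<beta> \<bullet> (M $ k)\<bar>) \<le> C + real CARD('m)"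
      by (simp add: sum_subtractf)
    have "e * norm \<beta> \<le> norm (M *v \<beta>)" by (rule e(2))
    also have "\<dots> \<le> (\<Sum>k\<in>UNIV. \<bar>(M *v \<beta>) $ k\<bar>)" by (rule norm_le_l1_cart)
    also have "\<dots> \<le> (\<Sum>k\<in>UNIV. \<bar>Y k - \<beta> \<bullet> (M $ k)\<bar> + \<bar>Y k\<bar>)"
      by (intro sum_mono) (simp add: matrix_vector_mul_component inner_commute)
    also have "\<dots> \<le> B"
      using residual by (simp add: B_def sum.distrib)
    finally show ?thesis
      using e(1) by (simp add: field_simps)
  qed
  then show ?thesis
    unfolding bounded_iff by blast
qed

lemma continuous_on_ssl_loglik:
  fixes Xt :: "'n::finite \<Rightarrow> real^'p::finite" and M :: "real^'p^'m::finite"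
  assumes "\<alpha> > 0" and "d > 0"
  shows "continuous_on UNIV (ssl_loglik \<alpha> d Xt Yt M Y)"
proof -
  have density: "continuous_on UNIV (\<lambda>\<beta>::real^'p. gn_density \<alpha> d (a - \<beta> \<bullet> x))" for a x
    by (intro continuous_on_compose2[OF continuous_on_gn_density[OF assms(1)]] continuous_intros)
       auto
  have "(1 / real CARD('n)) * (\<Sum>i\<in>UNIV. gn_density \<alpha> d (Yt j - \<beta> \<bullet> Xt i)) > 0" for j \<beta>
    using assms by (intro mult_pos_pos sum_pos gn_density_pos) auto
  then have unmatched_nonzero:
    "(1 / real CARD('n)) * (\<Sum>i\<in>UNIV. gn_density \<alpha> d (Yt j - \<beta> \<bullet> Xt i)) \<noteq> 0" for j \<beta>
    by (metis less_irrefl)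
  have matched_nonzero: "gn_density \<alpha> d t \<noteq> 0" for t
    using gn_density_pos[OF assms, of t] by linarith
  show ?thesis
    unfolding ssl_loglik_def
    by (intro continuous_on_add continuous_on_mult continuous_on_const continuous_on_sum
        continuous_on_ln density) (use unmatched_nonzero matched_nonzero in blast)+
qed

lemma ssl_loglik_le_residual_bound:
  fixes Xt :: "'n::finite \<Rightarrow> real^'p::finite" and Yt :: "'n \<Rightarrow> real"
    and M :: "real^'p^'m::finite" and Y :: "'m \<Rightarrow> real" and \<beta> :: "real^'p"
  assumes "\<alpha> > 0" and "d > 0"
  defines "N \<equiv> real (CARD('n) + CARD('m))"
  shows "N * ssl_loglik \<alpha> d Xt Yt M Y \<beta>
    \<le> N * ln (gn_density \<alpha> d 0) - d powr (-\<alpha>) * (\<Sum>k\<in>UNIV. \<bar>Y k - \<beta> \<bullet> (M $ k)\<bar> powr \<alpha>)"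
proof -
  let ?c = "gn_density \<alpha> d 0"
  have unmatched: "ln ((1 / real CARD('n)) * (\<Sum>i\<in>UNIV. gn_density \<alpha> d (Yt j - \<beta> \<bullet> Xt i))) \<le> ln ?c"
    for j
  proof -
    have "(\<Sum>i\<in>UNIV. gn_density \<alpha> d (Yt j - \<beta> \<bullet> Xt i)) \<le> (\<Sum>i\<in>(UNIV::'n set). ?c)"
      by (intro sum_mono gn_density_le_at_0 assms)
    then have "(1 / real CARD('n)) * (\<Sum>i\<in>UNIV. gn_density \<alpha> d (Yt j - \<beta> \<bullet> Xt i)) \<le> ?c"
      by (simp add: field_simps)
    moreover have "(1 / real CARD('n)) * (\<Sum>i\<in>UNIV. gn_density \<alpha> d (Yt j - \<beta> \<bullet> Xt i)) > 0"
      using assms by (intro mult_pos_pos sum_pos gn_density_pos) auto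
    ultimately show ?thesis by simp
  qed
  have "N > 0" by (simp add: N_def add_pos_pos)
  then have "N * ssl_loglik \<alpha> d Xt Yt M Y \<beta>
      = (\<Sum>j\<in>UNIV. ln ((1 / real CARD('n)) * (\<Sum>i\<in>UNIV. gn_density \<alpha> d (Yt j - \<beta> \<bullet> Xt i))))
        + (\<Sum>k\<in>UNIV. ln (gn_density \<alpha> d (Y k - \<beta> \<bullet> (M $ k))))"
    unfolding ssl_loglik_def N_def[symmetric]
    by (simp add: distrib_left mult.assoc[symmetric])
  also have "\<dots> \<le> (\<Sum>j\<in>(UNIV::'n set). ln ?c)
      + (\<Sum>k\<in>UNIV. ln ?c - d powr (-\<alpha>) * \<bar>Y k - \<beta> \<bullet> (M $ k)\<bar> powr \<alpha>)"
    by (intro add_mono sum_mono unmatched eq_refl[OF ln_gn_density[OF assms(1,2)]])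
  also have "\<dots> = N * ln ?c - d powr (-\<alpha>) * (\<Sum>k\<in>UNIV. \<bar>Y k - \<beta> \<bullet> (M $ k)\<bar> powr \<alpha>)"
    by (simp add: N_def sum_subtractf sum_distrib_left algebra_simps)
  finally show ?thesis .
qed

lemma bounded_ssl_loglik_superlevel:
  fixes Xt :: "'n::finite \<Rightarrow> real^'p::finite" and Yt :: "'n \<Rightarrow> real"
    and M :: "real^'p^'m::finite" and Y :: "'m \<Rightarrow> real"
  assumes "\<alpha> \<ge> 1" and "d > 0" and "rank M = CARD('p)"
  shows "bounded {\<beta>. c \<le> ssl_loglik \<alpha> d Xt Yt M Y \<beta>}"
proof -
  let ?R = "\<lambda>\<beta>. \<Sum>k\<in>UNIV. \<bar>Y k - \<beta> \<bullet> (M $ k)\<bar> powr \<alpha>"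
  define N where "N = real (CARD('n) + CARD('m))"
  define C where "C = (N * ln (gn_density \<alpha> d 0) - N * c) / d powr (-\<alpha>)"
  have "{\<beta>. c \<le> ssl_loglik \<alpha> d Xt Yt M Y \<beta>} \<subseteq> {\<beta>. ?R \<beta> \<le> C}"
  proof safe
    fix \<beta> assume "c \<le> ssl_loglik \<alpha> d Xt Yt M Y \<beta>"
    then have "N * c \<le> N * ssl_loglik \<alpha> d Xt Yt M Y \<beta>"
      by (simp add: N_def mult_left_mono)
    moreover have "\<alpha> > 0" using assms(1) by simp
    note ssl_loglik_le_residual_bound[OF this assms(2), of Xt Yt M Y \<beta>]
    ultimately have "d powr (-\<alpha>) * ?R \<beta> \<le> N * ln (gn_density \<alpha> d 0) - N * c"
      by (simp add: N_def)
    then show "?R \<beta> \<le> C"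
      using assms(2) by (simp add: C_def field_simps)
  qed
  then show ?thesis
    using bounded_residual_powr_sublevel[OF assms(1,3)] bounded_subset by blast
qed

theorem lemma1:
  fixes Xt :: "'n::finite \<Rightarrow> real^'p::finite" and Yt :: "'n \<Rightarrow> real"
    and M :: "real^'p^'m::finite" and Y :: "'m \<Rightarrow> real"
    and \<alpha> d :: real
  assumes "\<alpha> \<ge> 1" and "d > 0"
    and "rank M = CARD('p)"
  shows "\<exists>\<beta>0. \<forall>\<beta>. ssl_loglik \<alpha> d Xt Yt M Y \<beta> \<le> ssl_loglik \<alpha> d Xt Yt M Y \<beta>0"
proof (rule continuous_attains_max_if_bounded_superlevel)
  show "continuous_on UNIV (ssl_loglik \<alpha> d Xt Yt M Y)"
    using assms(1,2) by (intro continuous_on_ssl_loglik) auto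
  show "bounded {\<beta>. ssl_loglik \<alpha> d Xt Yt M Y 0 \<le> ssl_loglik \<alpha> d Xt Yt M Y \<beta>}"
    using assms by (rule bounded_ssl_loglik_superlevel)
qed

end
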